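(* Let $\mathcal X,\mathcal U$ be finite nonempty sets, $f:\mathcal X\times\mathcal U\to\mathcal X$ and $\ell,g:\mathcal X\to\mathbb R$. Let $V_{\mathrm A}^*(x)=\max_{\pi\in\Pi}\min_{\tau\in\mathbb N}g(\xi_x^\pi(\tau))$, $\tilde\ell(x)=\min\{\ell(x),V_{\mathrm A}^*(x)\}$, $$\tilde v_{\mathrm{RA}}^*(x)=\max_{\mathbf u\in\mathbb U}\max_{\tau\in\mathbb N}\min\Big\{\tilde\ell(\xi_x^{\mathbf u}(\tau)),\min_{\kappa\le\tau}g(\xi_x^{\mathbf u}(\kappa))\Big\},$$ $$v_{\mathrm{RAA}}^*(x)=\max_{\mathbf u\in\mathbb U}\min\Big\{\max_{\tau\in\mathbb N}\ell(\xi_x^{\mathbf u}(\tau)),\min_{\kappa\in\mathbb N}g(\xi_x^{\mathbf u}(\kappa))\Big\}.$$ Then $v_{\mathrm{RAA}}^*(x)=\tilde v_{\mathrm{RA}}^*(x)$ for every $x\in\mathcal X$.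
   Context: $\mathbb N=\{0,1,\dots\}$; $\Pi$ is the set of maps $\mathcal X\to\mathcal U$; $\mathbb U$ is the set of sequences $\mathbb N\to\mathcal U$. For $\pi\in\Pi$: $\xi_x^\pi(0)=x$, $\xi_x^\pi(t+1)=f(\xi_x^\pi(t),\pi(\xi_x^\pi(t)))$. For $\mathbf u\in\mathbb U$: $\xi_x^{\mathbf u}(0)=x$, $\xi_x^{\mathbf u}(t+1)=f(\xi_x^{\mathbf u}(t),\mathbf u(t))$. *)

theory Defs
  imports Complex_Main
begin

primrec traj_pol :: "('x \<Rightarrow> 'u \<Rightarrow> 'x) \<Rightarrow> ('x \<Rightarrow> 'u) \<Rightarrow> 'x \<Rightarrow> nat \<Rightarrow> 'x" where
  "traj_pol f p x 0 = x"
| "traj_pol f p x (Suc t) = f (traj_pol f p x t) (p (traj_pol f p x t))"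

primrec traj_seq :: "('x \<Rightarrow> 'u \<Rightarrow> 'x) \<Rightarrow> (nat \<Rightarrow> 'u) \<Rightarrow> 'x \<Rightarrow> nat \<Rightarrow> 'x" where
  "traj_seq f u x 0 = x"
| "traj_seq f u x (Suc t) = f (traj_seq f u x t) (u t)"

definition VA :: "('x \<Rightarrow> 'u \<Rightarrow> 'x) \<Rightarrow> ('x \<Rightarrow> real) \<Rightarrow> 'x \<Rightarrow> real" where
  "VA f g x = Max (range (\<lambda>p. Min (range (\<lambda>\<tau>. g (traj_pol f p x \<tau>)))))"

definition ell_tilde :: "('x \<Rightarrow> 'u \<Rightarrow> 'x) \<Rightarrow> ('x \<Rightarrow> real) \<Rightarrow> ('x \<Rightarrow> real) \<Rightarrow> 'x \<Rightarrow> real" where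
  "ell_tilde f l g x = min (l x) (VA f g x)"

definition vRA_tilde :: "('x \<Rightarrow> 'u \<Rightarrow> 'x) \<Rightarrow> ('x \<Rightarrow> real) \<Rightarrow> ('x \<Rightarrow> real) \<Rightarrow> 'x \<Rightarrow> real" where
  "vRA_tilde f l g x = Max (range (\<lambda>u::nat \<Rightarrow> 'u. Max (range (\<lambda>\<tau>.
      min (ell_tilde f l g (traj_seq f u x \<tau>))
          (Min ((\<lambda>\<kappa>. g (traj_seq f u x \<kappa>)) ` {..\<tau>}))))))"

definition vRAA :: "('x \<Rightarrow> 'u \<Rightarrow> 'x) \<Rightarrow> ('x \<Rightarrow> real) \<Rightarrow> ('x \<Rightarrow> real) \<Rightarrow> 'x \<Rightarrow> real" where
  "vRAA f l g x = Max (range (\<lambda>u::nat \<Rightarrow> 'u.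
      min (Max (range (\<lambda>\<tau>. l (traj_seq f u x \<tau>))))
          (Min (range (\<lambda>\<kappa>. g (traj_seq f u x \<kappa>))))))"

end

theory Submission
  imports Defs
begin

text \<open>
  Compare the two values through their upper level sets. Since all state and input sets are
  finite, every max and min is attained, so c \<le> vRAA(x) means that some input sequence
  reaches {l \<ge> c} while staying in {g \<ge> c} forever, and c \<le> VA(y) means that {g \<ge> c} is
  viable from y: the viability kernel is invariant under a feedback policy, so open-loop and
  closed-loop viability agree. Then c \<le> vRA_tilde(x) says that some input sequence reaches,
  within {g \<ge> c}, a point of {l \<ge> c} from which {g \<ge> c} is viable, and splicing the
  reaching inputs with the viable ones shows that this is the same condition.
\<close>

definition viable :: "('x \<Rightarrow> 'u \<Rightarrow> 'x) \<Rightarrow> ('x \<Rightarrow> bool) \<Rightarrow> 'x \<Rightarrow> bool" where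
  "viable f Q y \<longleftrightarrow> (\<exists>w. \<forall>t. Q (traj_seq f w y t))"

lemma traj_seq_Suc_shift:
  "traj_seq f u x (Suc t) = traj_seq f (\<lambda>s. u (Suc s)) (f x (u 0)) t"
  by (induction t) auto

lemma traj_seq_add:
  "traj_seq f u x (\<tau> + t) = traj_seq f (\<lambda>s. u (\<tau> + s)) (traj_seq f u x \<tau>) t"
  by (induction t) auto

lemma traj_seq_cong_prefix:
  "(\<And>s. s < \<tau> \<Longrightarrow> v s = u s) \<Longrightarrow> t \<le> \<tau> \<Longrightarrow> traj_seq f v x t = traj_seq f u x t"
  by (induction t) auto

lemma traj_seq_feedback: "traj_seq f (\<lambda>t. p (traj_pol f p y t)) y t = traj_pol f p y t"
  by (induction t) auto

lemma viable_step:
  assumes "viable f Q y"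
  shows "Q y" and "\<exists>a. viable f Q (f y a)"
proof -
  from assms obtain w where w: "\<forall>t. Q (traj_seq f w y t)"
    unfolding viable_def by blast
  show "Q y"
    using w[rule_format, of 0] by simp
  have "\<forall>t. Q (traj_seq f (\<lambda>s. w (Suc s)) (f y (w 0)) t)"
    using w by (metis traj_seq_Suc_shift)
  then show "\<exists>a. viable f Q (f y a)"
    unfolding viable_def by blast
qed

lemma viable_feedback_policy:
  obtains p where "\<And>y t. viable f Q y \<Longrightarrow> viable f Q (traj_pol f p y t)"
proof
  let ?p = "\<lambda>z. SOME a. viable f Q (f z a)"
  show "viable f Q (traj_pol f ?p y t)" if "viable f Q y" for y t
    using that by (induction t) (auto intro: someI_ex viable_step(2))
qed

lemma viable_iff_feedback: "viable f Q y \<longleftrightarrow> (\<exists>p. \<forall>t. Q (traj_pol f p y t))"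
proof
  assume y: "viable f Q y"
  obtain p where p: "\<And>y t. viable f Q y \<Longrightarrow> viable f Q (traj_pol f p y t)"
    using viable_feedback_policy by blast
  have "Q (traj_pol f p y t)" for t
    using p[OF y] by (rule viable_step(1))
  then show "\<exists>p. \<forall>t. Q (traj_pol f p y t)"
    by blast
next
  assume "\<exists>p. \<forall>t. Q (traj_pol f p y t)"
  then obtain p where "\<forall>t. Q (traj_pol f p y t)"
    by blast
  then have "\<forall>t. Q (traj_seq f (\<lambda>t. p (traj_pol f p y t)) y t)"
    by (simp add: traj_seq_feedback)
  then show "viable f Q y"
    unfolding viable_def by blast
qed

lemma reach_always_iff_reach_viable:
  "(\<exists>u \<tau>. P (traj_seq f u x \<tau>) \<and> (\<forall>\<kappa>. Q (traj_seq f u x \<kappa>))) \<longleftrightarrow>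
   (\<exists>u \<tau>. P (traj_seq f u x \<tau>) \<and> viable f Q (traj_seq f u x \<tau>) \<and>
      (\<forall>\<kappa>\<le>\<tau>. Q (traj_seq f u x \<kappa>)))"
  (is "?always \<longleftrightarrow> ?viable")
proof
  assume ?always
  then obtain u \<tau> where "P (traj_seq f u x \<tau>)" and Q: "\<forall>\<kappa>. Q (traj_seq f u x \<kappa>)"
    by blast
  moreover have "Q (traj_seq f (\<lambda>s. u (\<tau> + s)) (traj_seq f u x \<tau>) t)" for t
    using Q[rule_format, of "\<tau> + t"] by (simp only: traj_seq_add)
  then have "viable f Q (traj_seq f u x \<tau>)"
    unfolding viable_def by blast
  ultimately show ?viable
    by blast
next
  assume ?viable
  then obtain u \<tau> w where P: "P (traj_seq f u x \<tau>)" and Q: "\<forall>\<kappa>\<le>\<tau>. Q (traj_seq f u x \<kappa>)"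
    and w: "\<forall>t. Q (traj_seq f w (traj_seq f u x \<tau>) t)"
    unfolding viable_def by blast
  define v where "v = (\<lambda>s. if s < \<tau> then u s else w (s - \<tau>))"
  have prefix: "traj_seq f v x t = traj_seq f u x t" if "t \<le> \<tau>" for t
    by (rule traj_seq_cong_prefix[OF _ that]) (simp add: v_def)
  have suffix: "traj_seq f v x (\<tau> + t) = traj_seq f w (traj_seq f u x \<tau>) t" for t
  proof -
    have "traj_seq f v x (\<tau> + t) = traj_seq f (\<lambda>s. v (\<tau> + s)) (traj_seq f v x \<tau>) t"
      by (rule traj_seq_add)
    also have "\<dots> = traj_seq f w (traj_seq f u x \<tau>) t"
      using prefix[of \<tau>] by (simp add: v_def)
    finally show ?thesis .
  qed
  have "P (traj_seq f v x \<tau>)"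
    using P prefix by simp
  moreover have "Q (traj_seq f v x \<kappa>)" for \<kappa>
  proof (cases "\<kappa> \<le> \<tau>")
    case True
    then show ?thesis
      using Q prefix by simp
  next
    case False
    then obtain t where "\<kappa> = \<tau> + t"
      using le_Suc_ex nat_le_linear by blast
    then show ?thesis
      using w suffix by simp
  qed
  ultimately show ?always
    by blast
qed

lemma Max_range_in:
  fixes F :: "'a \<Rightarrow> 'b::linorder"
  assumes "finite B" and "range F \<subseteq> B"
  shows "Max (range F) \<in> B"
proof -
  have "finite (range F)"
    using assms finite_subset by blast
  then have "Max (range F) \<in> range F"
    by (rule Max_in) simp
  then show ?thesis
    using assms(2) by blast
qed

lemma Min_image_comp_in:
  fixes h :: "'x::finite \<Rightarrow> 'b::linorder"
  assumes "A \<noteq> {}"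
  shows "Min ((\<lambda>t. h (F t)) ` A) \<in> range h"
proof -
  have "finite ((\<lambda>t. h (F t)) ` A)"
    by (rule finite_subset[of _ "range h"]) auto
  then show ?thesis
    using assms Min_in by fastforce
qed

lemma min_in_Un: "a \<in> A \<Longrightarrow> b \<in> B \<Longrightarrow> min a b \<in> A \<union> B"
  by (simp add: min_def)

lemma VA_ge_iff:
  fixes f :: "'x::finite \<Rightarrow> 'u::finite \<Rightarrow> 'x"
  shows "c \<le> VA f g y \<longleftrightarrow> viable f (\<lambda>z. c \<le> g z) y"
  unfolding VA_def viable_iff_feedback
  by (simp add: Max_ge_iff Min_ge_iff finite_range_imageI)

lemma vRAA_ge_iff:
  fixes f :: "'x::finite \<Rightarrow> 'u::finite \<Rightarrow> 'x"
  shows "c \<le> vRAA f l g x \<longleftrightarrow>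
    (\<exists>u \<tau>. c \<le> l (traj_seq f u x \<tau>) \<and> (\<forall>\<kappa>. c \<le> g (traj_seq f u x \<kappa>)))"
proof -
  have "range (\<lambda>u. min (Max (range (\<lambda>\<tau>. l (traj_seq f u x \<tau>))))
      (Min (range (\<lambda>\<kappa>. g (traj_seq f u x \<kappa>))))) \<subseteq> range l \<union> range g"
    by (intro image_subsetI min_in_Un Max_range_in Min_image_comp_in) auto
  then have "finite (range (\<lambda>u. min (Max (range (\<lambda>\<tau>. l (traj_seq f u x \<tau>))))
      (Min (range (\<lambda>\<kappa>. g (traj_seq f u x \<kappa>))))))"
    by (rule finite_subset) simp
  then show ?thesis
    unfolding vRAA_def by (simp add: Max_ge_iff Min_ge_iff finite_range_imageI)
qed

lemma vRA_tilde_ge_iff: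
  fixes f :: "'x::finite \<Rightarrow> 'u::finite \<Rightarrow> 'x"
  shows "c \<le> vRA_tilde f l g x \<longleftrightarrow>
    (\<exists>u \<tau>. c \<le> l (traj_seq f u x \<tau>) \<and> viable f (\<lambda>z. c \<le> g z) (traj_seq f u x \<tau>) \<and>
       (\<forall>\<kappa>\<le>\<tau>. c \<le> g (traj_seq f u x \<kappa>)))"
proof -
  let ?H = "\<lambda>u \<tau>. min (ell_tilde f l g (traj_seq f u x \<tau>))
      (Min ((\<lambda>\<kappa>. g (traj_seq f u x \<kappa>)) ` {..\<tau>}))"
  let ?B = "range (ell_tilde f l g) \<union> range g"
  have H: "range (?H u) \<subseteq> ?B" for u
    by (intro image_subsetI min_in_Un Min_image_comp_in) auto
  then have "range (\<lambda>u. Max (range (?H u))) \<subseteq> ?B"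
    by (intro image_subsetI Max_range_in[OF _ H]) simp
  then have "finite (range (\<lambda>u. Max (range (?H u))))"
    by (rule finite_subset) simp
  moreover have "finite (range (?H u))" for u
    using H by (rule finite_subset) simp
  ultimately have "c \<le> vRA_tilde f l g x \<longleftrightarrow> (\<exists>u \<tau>. c \<le> ?H u \<tau>)"
    unfolding vRA_tilde_def by (simp add: Max_ge_iff)
  moreover have "c \<le> Min ((\<lambda>\<kappa>. g (traj_seq f u x \<kappa>)) ` {..\<tau>}) \<longleftrightarrow>
      (\<forall>\<kappa>\<le>\<tau>. c \<le> g (traj_seq f u x \<kappa>))" for u \<tau>
    by (auto simp: Min_ge_iff)
  ultimately show ?thesis
    by (simp add: ell_tilde_def VA_ge_iff)
qed

theorem mainTheorem8:
  fixes f :: "'x::finite \<Rightarrow> 'u::finite \<Rightarrow> 'x"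
    and l g :: "'x \<Rightarrow> real"
  shows "\<forall>x. vRAA f l g x = vRA_tilde f l g x"
proof
  fix x
  have "c \<le> vRAA f l g x \<longleftrightarrow> c \<le> vRA_tilde f l g x" for c
    unfolding vRAA_ge_iff vRA_tilde_ge_iff by (rule reach_always_iff_reach_viable)
  then show "vRAA f l g x = vRA_tilde f l g x"
    by (meson order.antisym order.refl)
qed

end
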